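(* Let $B$ be a minimum-weight basis of the weighted uncertainty matroid $\mathcal{M}=(E,\mathcal{I},A,w)$ and let $Q$ be a certificate that verifies $B$. Let $e\in B$ and $e'\notin B$ with $U_e=U_{e'}=w_e=w_{e'}$ be such that $e\in C_{e'}$, where $C_{e'}$ is the fundamental circuit of $e'$ with respect to $B$. Then $Q'=(Q\setminus\{e'\})\cup\{e\}$ is a certificate that verifies $B'=(B\setminus\{e\})\cup\{e'\}$.
   Context: A weighted uncertainty matroid $\mathcal{M}=(E,\mathcal{I},A,w)$ consists of a matroid $M=(E,\mathcal{I})$ on a finite set $E$, for each $e\in E$ a non-empty finite union $A_e$ of bounded real intervals (each open or closed), and a weight $w_e\in A_e$. Let $L_e=\inf A_e$, $U_e=\sup A_e$. A minimum-weight basis is a basis of $M$ minimizing the sum of weights. A weight assignment is $w^*:E\to\mathbb{R}$ with $w^*_e\in A_e$, consistent with $Q$ if $w^*_e=w_e$ for $e\in Q$. $Q$ verifies a basis $B$ (is a certificate for $B$) if for every weight assignment consistent with $Q$, $B$ is a minimum-weight basis with respect to it. For a basis $B$ and $f\notin B$, the fundamental circuit of $f$ is the unique circuit contained in $B\cup\{f\}$. *)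

theory Defs
  imports Complex_Main
begin

definition matroid :: "'a set \<Rightarrow> ('a set \<Rightarrow> bool) \<Rightarrow> bool" where
  "matroid E indep \<longleftrightarrow>
     finite E \<and> indep {} \<and> (\<forall>X. indep X \<longrightarrow> X \<subseteq> E) \<and>
     (\<forall>X Y. indep X \<and> Y \<subseteq> X \<longrightarrow> indep Y) \<and>
     (\<forall>X Y. indep X \<and> indep Y \<and> card X < card Y \<longrightarrow> (\<exists>y\<in>Y - X. indep (insert y X)))"

definition basis :: "('a set \<Rightarrow> bool) \<Rightarrow> 'a set \<Rightarrow> bool" where
  "basis indep B \<longleftrightarrow> indep B \<and> (\<forall>X. indep X \<and> B \<subseteq> X \<longrightarrow> X = B)"

definition circuit :: "'a set \<Rightarrow> ('a set \<Rightarrow> bool) \<Rightarrow> 'a set \<Rightarrow> bool" where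
  "circuit E indep C \<longleftrightarrow> C \<subseteq> E \<and> \<not> indep C \<and> (\<forall>D. D \<subset> C \<longrightarrow> indep D)"

definition fundamental_circuit :: "'a set \<Rightarrow> ('a set \<Rightarrow> bool) \<Rightarrow> 'a set \<Rightarrow> 'a \<Rightarrow> 'a set" where
  "fundamental_circuit E indep B f = (THE C. circuit E indep C \<and> C \<subseteq> B \<union> {f})"

definition bounded_interval :: "real set \<Rightarrow> bool" where
  "bounded_interval J \<longleftrightarrow> (\<exists>a b. (a \<le> b \<and> J = {a..b}) \<or> (a < b \<and> J = {a<..<b}))"

definition uncertainty_area :: "real set \<Rightarrow> bool" where
  "uncertainty_area S \<longleftrightarrow>
     (\<exists>I. finite I \<and> I \<noteq> {} \<and> (\<forall>J\<in>I. bounded_interval J) \<and> S = \<Union>I)"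

definition uncertainty_matroid ::
  "'a set \<Rightarrow> ('a set \<Rightarrow> bool) \<Rightarrow> ('a \<Rightarrow> real set) \<Rightarrow> ('a \<Rightarrow> real) \<Rightarrow> bool" where
  "uncertainty_matroid E indep A w \<longleftrightarrow>
     matroid E indep \<and> (\<forall>e\<in>E. uncertainty_area (A e) \<and> w e \<in> A e)"

definition lower :: "('a \<Rightarrow> real set) \<Rightarrow> 'a \<Rightarrow> real" where
  "lower A e = Inf (A e)"

definition upper :: "('a \<Rightarrow> real set) \<Rightarrow> 'a \<Rightarrow> real" where
  "upper A e = Sup (A e)"

definition min_weight_basis :: "('a set \<Rightarrow> bool) \<Rightarrow> ('a \<Rightarrow> real) \<Rightarrow> 'a set \<Rightarrow> bool" where
  "min_weight_basis indep c B \<longleftrightarrow>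
     basis indep B \<and> (\<forall>B'. basis indep B' \<longrightarrow> sum c B \<le> sum c B')"

definition consistent_assignment ::
  "'a set \<Rightarrow> ('a \<Rightarrow> real set) \<Rightarrow> ('a \<Rightarrow> real) \<Rightarrow> 'a set \<Rightarrow> ('a \<Rightarrow> real) \<Rightarrow> bool" where
  "consistent_assignment E A w Q w' \<longleftrightarrow> (\<forall>e\<in>E. w' e \<in> A e) \<and> (\<forall>e\<in>Q. w' e = w e)"

definition verifies ::
  "'a set \<Rightarrow> ('a set \<Rightarrow> bool) \<Rightarrow> ('a \<Rightarrow> real set) \<Rightarrow> ('a \<Rightarrow> real) \<Rightarrow> 'a set \<Rightarrow> 'a set \<Rightarrow> bool" where
  "verifies E indep A w Q B \<longleftrightarrow>
     Q \<subseteq> E \<and> (\<forall>w'. consistent_assignment E A w Q w' \<longrightarrow> min_weight_basis indep w' B)"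

end

theory Submission
  imports Defs
begin

text \<open>Given weights \<open>w'\<close> consistent with \<open>Q'\<close>, reset the weight of \<open>e'\<close> to its true value
  \<open>w e'\<close>. The resulting weights are consistent with \<open>Q\<close>, so \<open>B\<close> is a minimum-weight basis for
  them, and so is \<open>B'\<close>: it is a basis by the fundamental-circuit exchange, and it has the same
  weight because \<open>e\<close> is queried in \<open>Q'\<close> and \<open>w e = w e'\<close>. Finally \<open>w' e' \<le> upper A e' = w e'\<close>, so
  passing back to \<open>w'\<close> only lowers the weight of the element \<open>e'\<close> of \<open>B'\<close>, which keeps \<open>B'\<close>
  minimum.\<close>

lemma sum_fun_upd:
  fixes c :: "'a \<Rightarrow> 'b::ab_group_add"
  assumes "finite X"
  shows "sum (c(x := v)) X = sum c X + (if x \<in> X then v - c x else 0)"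
  using assms by (simp add: sum.If_cases if_distrib[of "\<lambda>g. g _"] Diff_eq[symmetric] sum_diff1)

context
  fixes E :: "'a set" and indep :: "'a set \<Rightarrow> bool"
  assumes matroid: "matroid E indep"
begin

lemma indep_subset: "indep X \<Longrightarrow> Y \<subseteq> X \<Longrightarrow> indep Y"
  using matroid unfolding matroid_def by blast

lemma indep_subset_carrier: "indep X \<Longrightarrow> X \<subseteq> E"
  using matroid unfolding matroid_def by blast

lemma indep_finite: "indep X \<Longrightarrow> finite X"
  using matroid unfolding matroid_def by (meson finite_subset)

lemma indep_augment:
  "indep X \<Longrightarrow> indep Y \<Longrightarrow> card X < card Y \<Longrightarrow> \<exists>y\<in>Y - X. indep (insert y X)"
  using matroid unfolding matroid_def by blast

lemma indep_augment_to_card: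
  assumes "indep X" "indep Y" "card X \<le> card Y"
  shows "\<exists>Z. indep Z \<and> X \<subseteq> Z \<and> Z \<subseteq> X \<union> Y \<and> card Z = card Y"
  using assms
proof (induction "card Y - card X" arbitrary: X)
  case 0
  then show ?case by auto
next
  case (Suc n)
  then have "card X < card Y" by linarith
  then obtain y where y: "y \<in> Y - X" "indep (insert y X)"
    using indep_augment Suc.prems(1,2) by blast
  have card_yX: "card (insert y X) = Suc (card X)"
    using y indep_finite[OF Suc.prems(1)] by simp
  then have "n = card Y - card (insert y X)" using Suc.hyps(2) by simp
  then obtain Z where "indep Z" "insert y X \<subseteq> Z" "Z \<subseteq> insert y X \<union> Y" "card Z = card Y"
    using Suc.hyps(1)[OF _ y(2) Suc.prems(2)] card_yX \<open>card X < card Y\<close> by auto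
  then show ?case using y by blast
qed

lemma circuit_exists:
  assumes "X \<subseteq> E" "\<not> indep X"
  shows "\<exists>C. circuit E indep C \<and> C \<subseteq> X"
proof -
  obtain C where C: "C \<subseteq> X" "\<not> indep C"
    and least: "\<And>D. D \<subseteq> X \<Longrightarrow> \<not> indep D \<Longrightarrow> card C \<le> card D"
    using ex_has_least_nat[of "\<lambda>D. D \<subseteq> X \<and> \<not> indep D" X card] assms(2) by blast
  have "finite X"
    using matroid assms(1) unfolding matroid_def by (meson finite_subset)
  then have "finite C" using C(1) by (rule finite_subset[rotated])
  have "indep D" if "D \<subset> C" for D
  proof (rule ccontr)
    assume "\<not> indep D"
    then have "card C \<le> card D" using least that C(1) by blast
    moreover have "card D < card C" using psubset_card_mono[OF \<open>finite C\<close> that] .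
    ultimately show False by simp
  qed
  then show ?thesis
    using C assms(1) unfolding circuit_def by blast
qed

lemma circuit_unique:
  assumes I: "indep I" and "f \<notin> I"
    and C1: "circuit E indep C1" "C1 \<subseteq> insert f I"
    and C2: "circuit E indep C2" "C2 \<subseteq> insert f I"
  shows "C1 = C2"
proof (rule ccontr)
  assume "C1 \<noteq> C2"
  have dep1: "\<not> indep C1" and min1: "\<And>D. D \<subset> C1 \<Longrightarrow> indep D"
    using C1(1) unfolding circuit_def by blast+
  have dep2: "\<not> indep C2" and min2: "\<And>D. D \<subset> C2 \<Longrightarrow> indep D"
    using C2(1) unfolding circuit_def by blast+
  have "\<not> C1 \<subseteq> C2"
    using dep1 min2 \<open>C1 \<noteq> C2\<close> by blast
  then obtain x where x: "x \<in> C1" "x \<notin> C2" by blast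
  have "f \<in> C2"
    using dep2 C2(2) indep_subset[OF I, of C2] by blast
  then have "x \<in> I" "x \<noteq> f"
    using x C1(2) by auto
  text \<open>Extend \<open>C1 - {x}\<close> inside \<open>insert f I\<close> to an independent set of size \<open>card I\<close>; avoiding
    \<open>x\<close>, it must be all of \<open>insert f I - {x}\<close>, which contains \<open>C2\<close>.\<close>
  let ?W = "insert f I - {x}"
  have "finite I" using I by (rule indep_finite)
  then have "finite ?W" "card ?W = card I"
    using \<open>f \<notin> I\<close> \<open>x \<in> I\<close> by simp_all
  have "C1 - {x} \<subseteq> ?W" using C1(2) by blast
  then have "card (C1 - {x}) \<le> card I"
    using card_mono[OF \<open>finite ?W\<close>] \<open>card ?W = card I\<close> by simp
  moreover have "indep (C1 - {x})"
    using min1 x(1) by blast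
  ultimately obtain Z where Z: "indep Z" "C1 - {x} \<subseteq> Z" "Z \<subseteq> (C1 - {x}) \<union> I" "card Z = card I"
    using indep_augment_to_card[OF _ I] by blast
  have "x \<notin> Z"
  proof
    assume "x \<in> Z"
    with Z(2) have "C1 \<subseteq> Z" by blast
    with Z(1) dep1 show False using indep_subset by blast
  qed
  with Z(3) C1(2) have "Z \<subseteq> ?W" by blast
  then have "Z = ?W"
    using card_subset_eq[OF \<open>finite ?W\<close>] Z(4) \<open>card ?W = card I\<close> by simp
  with C2(2) x(2) have "C2 \<subseteq> Z" by blast
  with Z(1) dep2 show False using indep_subset by blast
qed

lemma fundamental_circuit_eq:
  assumes "indep B" "f \<notin> B" "circuit E indep C" "C \<subseteq> insert f B"
  shows "fundamental_circuit E indep B f = C"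
  unfolding fundamental_circuit_def
proof (rule the_equality)
  show "circuit E indep C \<and> C \<subseteq> B \<union> {f}" using assms(3,4) by simp
  show "\<And>D. circuit E indep D \<and> D \<subseteq> B \<union> {f} \<Longrightarrow> D = C"
    using circuit_unique[OF assms(1,2)] assms(3,4) by auto
qed

lemma basis_if_indep_card_ge:
  assumes B: "basis indep B" and X: "indep X" "card B \<le> card X"
  shows "basis indep X"
  unfolding basis_def
proof (intro conjI allI impI X(1))
  fix Y assume Y: "indep Y \<and> X \<subseteq> Y"
  show "Y = X"
  proof (rule ccontr)
    assume "Y \<noteq> X"
    then have "card B < card Y"
      using Y X(2) psubset_card_mono[of Y X] indep_finite by fastforce
    then obtain y where "y \<in> Y - B" "indep (insert y B)"
      using indep_augment B Y unfolding basis_def by blast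
    then show False using B unfolding basis_def by blast
  qed
qed

lemma basis_exchange_fundamental_circuit:
  assumes B: "basis indep B" and "e \<in> B" "f \<in> E" "f \<notin> B"
    and e: "e \<in> fundamental_circuit E indep B f"
  shows "basis indep (insert f (B - {e}))"
proof -
  have "indep B" using B unfolding basis_def by blast
  have "indep (insert f (B - {e}))"
  proof (rule ccontr)
    assume "\<not> indep (insert f (B - {e}))"
    moreover have "insert f (B - {e}) \<subseteq> E"
      using indep_subset_carrier[OF \<open>indep B\<close>] \<open>f \<in> E\<close> by blast
    ultimately obtain C where C: "circuit E indep C" "C \<subseteq> insert f (B - {e})"
      using circuit_exists by blast
    then have "fundamental_circuit E indep B f = C"
      using fundamental_circuit_eq[OF \<open>indep B\<close> \<open>f \<notin> B\<close>] by blast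
    then show False using e C(2) \<open>e \<in> B\<close> \<open>f \<notin> B\<close> by auto
  qed
  moreover have "card (insert f (B - {e})) = card B"
    using indep_finite[OF \<open>indep B\<close>] \<open>e \<in> B\<close> \<open>f \<notin> B\<close>
    by (metis Diff_iff card_Suc_Diff1 card_insert_disjoint finite_Diff)
  ultimately show ?thesis
    using basis_if_indep_card_ge[OF B] by simp
qed

lemma min_weight_basis_decrease_weight:
  assumes B: "min_weight_basis indep c B" and "x \<in> B" "v \<le> c x"
  shows "min_weight_basis indep (c(x := v)) B"
  unfolding min_weight_basis_def
proof (intro conjI allI impI)
  show "basis indep B" using B unfolding min_weight_basis_def by blast
  then have "finite B" using indep_finite unfolding basis_def by blast
  fix X assume X: "basis indep X"
  then have "finite X" using indep_finite unfolding basis_def by blast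
  have "sum c B \<le> sum c X" using B X unfolding min_weight_basis_def by blast
  moreover have "sum (c(x := v)) B = sum c B + (v - c x)"
    using sum_fun_upd[OF \<open>finite B\<close>, of c x v] \<open>x \<in> B\<close> by simp
  moreover have "sum c X + (v - c x) \<le> sum (c(x := v)) X"
    using sum_fun_upd[OF \<open>finite X\<close>, of c x v] \<open>v \<le> c x\<close> by simp
  ultimately show "sum (c(x := v)) B \<le> sum (c(x := v)) X" by linarith
qed

lemma min_weight_basis_exchange:
  assumes B: "min_weight_basis indep c B" and "e \<in> B" "f \<in> E" "f \<notin> B"
    and "e \<in> fundamental_circuit E indep B f" and "c f = c e"
  shows "min_weight_basis indep c (insert f (B - {e}))"
proof -
  have "basis indep B" using B unfolding min_weight_basis_def by blast
  then have "basis indep (insert f (B - {e}))"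
    using basis_exchange_fundamental_circuit assms(2-5) by blast
  moreover have "finite B"
    using \<open>basis indep B\<close> indep_finite unfolding basis_def by blast
  then have "sum c (insert f (B - {e})) = sum c B"
    using assms(2,4,6) by (simp add: sum_diff1)
  ultimately show ?thesis using B unfolding min_weight_basis_def by simp
qed

end

lemma uncertainty_area_bdd_above:
  assumes "uncertainty_area S"
  shows "bdd_above S"
proof -
  obtain I where I: "finite I" "\<forall>J\<in>I. bounded_interval J" "S = \<Union>I"
    using assms unfolding uncertainty_area_def by blast
  have "\<forall>J\<in>I. bdd_above J"
    using I(2) unfolding bounded_interval_def by auto
  then show ?thesis using bdd_above_UN[of I "\<lambda>J. J"] I by simp
qed

lemma le_upper: "uncertainty_area (A e) \<Longrightarrow> x \<in> A e \<Longrightarrow> x \<le> upper A e"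
  unfolding upper_def by (simp add: cSup_upper uncertainty_area_bdd_above)

lemma consistent_assignment_reset:
  assumes "consistent_assignment E A w Q w'" "Q' \<subseteq> insert x Q" "w x \<in> A x"
  shows "consistent_assignment E A w Q' (w'(x := w x))"
  using assms unfolding consistent_assignment_def by auto

theorem lemma10:
  fixes E :: "'a set" and indep :: "'a set \<Rightarrow> bool"
    and A :: "'a \<Rightarrow> real set" and w :: "'a \<Rightarrow> real"
    and B Q :: "'a set" and e e' :: 'a
  assumes "uncertainty_matroid E indep A w"
    and "min_weight_basis indep w B"
    and "verifies E indep A w Q B"
    and "e \<in> B" and "e' \<in> E" and "e' \<notin> B"
    and "upper A e = upper A e'" and "upper A e' = w e" and "w e = w e'"
    and "e \<in> fundamental_circuit E indep B e'"
  shows "verifies E indep A w ((Q - {e'}) \<union> {e}) ((B - {e}) \<union> {e'})"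
proof -
  let ?Q' = "(Q - {e'}) \<union> {e}" and ?B' = "insert e' (B - {e})"
  have m: "matroid E indep" and A_e': "uncertainty_area (A e')" "w e' \<in> A e'"
    using assms(1,5) unfolding uncertainty_matroid_def by auto
  have "min_weight_basis indep w' ?B'" if w': "consistent_assignment E A w ?Q' w'" for w'
  proof -
    let ?w = "w'(e' := w e')"
    have "consistent_assignment E A w Q ?w"
      using consistent_assignment_reset[OF w' _ A_e'(2)] by blast
    then have min_B: "min_weight_basis indep ?w B"
      using assms(3) unfolding verifies_def by blast
    have "?w e' = ?w e"
      using w' assms(4,6,9) unfolding consistent_assignment_def by auto
    note min_B' = min_weight_basis_exchange[OF m min_B assms(4,5,6,10) this]
    have "w' e' \<le> ?w e'"
      using le_upper[of A e', OF A_e'(1)] w' assms(5,8,9) unfolding consistent_assignment_def by auto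
    then have "min_weight_basis indep (?w(e' := w' e')) ?B'"
      using min_weight_basis_decrease_weight[OF m min_B'] by blast
    then show ?thesis by simp
  qed
  moreover have "?Q' \<subseteq> E"
  proof -
    have "B \<subseteq> E"
      using assms(2) indep_subset_carrier[OF m] unfolding min_weight_basis_def basis_def by blast
    then show ?thesis using assms(3,4) unfolding verifies_def by blast
  qed
  moreover have "(B - {e}) \<union> {e'} = ?B'" by auto
  ultimately show ?thesis unfolding verifies_def by simp
qed

end
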